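(* Let $(X,\mathbb{A},d)$ be a complete $C^*$-algebra valued asymmetric metric space and let $T:X\to X$ be a forward $C^*$-algebra valued contractive mapping, i.e. there exists $a\in\mathbb{A}$ with $\|a\|<1$ such that $d(Tx,Ty)\preceq a^*\,d(x,y)\,a$ for all $x,y\in X$. Then $T$ has a unique fixed point in $X$.
   Context: $\mathbb{A}$ is a unital $C^*$-algebra with unit $I_{\mathbb{A}}$ and zero $0_{\mathbb{A}}$; $\mathbb{A}^+$ denotes its positive elements and, for self-adjoint $a,b$, $a\preceq b$ means $b-a\in\mathbb{A}^+$. $\epsilon\succ 0_{\mathbb{A}}$ means $\epsilon\in\mathbb{A}^+$ is invertible (equivalently $\epsilon\succeq\delta I_{\mathbb{A}}$ for some real $\delta>0$). A $C^*$-algebra valued asymmetric metric on a nonempty set $X$ is a map $d:X\times X\to\mathbb{A}$ such that (i) $0_{\mathbb{A}}\preceq d(x,y)$ for all $x,y$, and $d(x,y)=0_{\mathbb{A}}$ iff $x=y$; (ii) $d(x,y)\preceq d(x,z)+d(z,y)$ for all $x,y,z$ (symmetry not required); $(X,\mathbb{A},d)$ is then a $C^*$-algebra valued asymmetric metric space. A sequence $\{x_n\}$ forward converges to $x$ if for every $\epsilon\succ0_{\mathbb{A}}$ there is $k$ with $d(x,x_n)\preceq\epsilon$ for all $n\ge k$; it backward converges to $x$ if for every $\epsilon\succ0_{\mathbb{A}}$ there is $k$ with $d(x_n,x)\preceq\epsilon$ for all $n\ge k$. $\{x_n\}$ is forward Cauchy if for every $\epsilon\succ0_{\mathbb{A}}$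 there is $k$ with $d(x_p,x_n)\preceq\epsilon$ for all $n>p\ge k$; it is backward Cauchy if for every $\epsilon\succ0_{\mathbb{A}}$ there is $k$ with $d(x_n,x_p)\preceq\epsilon$ for all $n>p\ge k$. $X$ is forward (resp. backward) complete if every forward (resp. backward) Cauchy sequence forward (resp. backward) converges to some point of $X$; $X$ is complete if it is both forward and backward complete. *)

theory Defs
  imports "HOL-Analysis.Analysis"
begin

text \<open>A unital complex C*-algebra, presented on a type 'a that is a real Banach algebra
with unit (norm 1 = 1), together with a complex scalar multiplication sc and an
involution star satisfying the C*-identity.\<close>

definition cstar_algebra ::
  "(complex \<Rightarrow> 'a::{real_normed_algebra_1,banach} \<Rightarrow> 'a) \<Rightarrow> ('a \<Rightarrow> 'a) \<Rightarrow> bool" where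
  "cstar_algebra sc star \<longleftrightarrow>
     (\<forall>r x. sc (complex_of_real r) x = scaleR r x) \<and>
     (\<forall>c1 c2 x. sc (c1 * c2) x = sc c1 (sc c2 x)) \<and>
     (\<forall>c1 c2 x. sc (c1 + c2) x = sc c1 x + sc c2 x) \<and>
     (\<forall>c x y. sc c (x + y) = sc c x + sc c y) \<and>
     (\<forall>c x. norm (sc c x) = cmod c * norm x) \<and>
     (\<forall>c x y. sc c (x * y) = sc c x * y \<and> sc c (x * y) = x * sc c y) \<and>
     (\<forall>x. star (star x) = x) \<and>
     (\<forall>x y. star (x + y) = star x + star y) \<and>
     (\<forall>x y. star (x * y) = star y * star x) \<and>
     (\<forall>c x. star (sc c x) = sc (cnj c) (star x)) \<and>
     (\<forall>x. norm (star x * x) = (norm x)\<^sup>2)"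

definition c_invertible :: "'a::ring_1 \<Rightarrow> bool" where
  "c_invertible x \<longleftrightarrow> (\<exists>y. y * x = 1 \<and> x * y = 1)"

definition c_spectrum :: "(complex \<Rightarrow> 'a::ring_1 \<Rightarrow> 'a) \<Rightarrow> 'a \<Rightarrow> complex set" where
  "c_spectrum sc x = {z. \<not> c_invertible (x - sc z 1)}"

definition c_positive :: "(complex \<Rightarrow> 'a::ring_1 \<Rightarrow> 'a) \<Rightarrow> ('a \<Rightarrow> 'a) \<Rightarrow> 'a \<Rightarrow> bool" where
  "c_positive sc star x \<longleftrightarrow>
     star x = x \<and> c_spectrum sc x \<subseteq> {complex_of_real r | r. r \<ge> 0}"

definition c_le :: "(complex \<Rightarrow> 'a::ring_1 \<Rightarrow> 'a) \<Rightarrow> ('a \<Rightarrow> 'a) \<Rightarrow> 'a \<Rightarrow> 'a \<Rightarrow> bool" where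
  "c_le sc star a b \<longleftrightarrow> c_positive sc star (b - a)"

definition c_gt0 :: "(complex \<Rightarrow> 'a::ring_1 \<Rightarrow> 'a) \<Rightarrow> ('a \<Rightarrow> 'a) \<Rightarrow> 'a \<Rightarrow> bool" where
  "c_gt0 sc star e \<longleftrightarrow> c_positive sc star e \<and> c_invertible e"

definition casym_metric ::
  "(complex \<Rightarrow> 'a::ring_1 \<Rightarrow> 'a) \<Rightarrow> ('a \<Rightarrow> 'a) \<Rightarrow> ('x \<Rightarrow> 'x \<Rightarrow> 'a) \<Rightarrow> bool" where
  "casym_metric sc star d \<longleftrightarrow>
     (\<forall>x y. c_le sc star 0 (d x y)) \<and>
     (\<forall>x y. d x y = 0 \<longleftrightarrow> x = y) \<and>
     (\<forall>x y z. c_le sc star (d x y) (d x z + d z y))"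

definition forward_conv ::
  "(complex \<Rightarrow> 'a::ring_1 \<Rightarrow> 'a) \<Rightarrow> ('a \<Rightarrow> 'a) \<Rightarrow> ('x \<Rightarrow> 'x \<Rightarrow> 'a) \<Rightarrow> (nat \<Rightarrow> 'x) \<Rightarrow> 'x \<Rightarrow> bool" where
  "forward_conv sc star d s x \<longleftrightarrow>
     (\<forall>e. c_gt0 sc star e \<longrightarrow> (\<exists>k. \<forall>n\<ge>k. c_le sc star (d x (s n)) e))"

definition backward_conv ::
  "(complex \<Rightarrow> 'a::ring_1 \<Rightarrow> 'a) \<Rightarrow> ('a \<Rightarrow> 'a) \<Rightarrow> ('x \<Rightarrow> 'x \<Rightarrow> 'a) \<Rightarrow> (nat \<Rightarrow> 'x) \<Rightarrow> 'x \<Rightarrow> bool" where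
  "backward_conv sc star d s x \<longleftrightarrow>
     (\<forall>e. c_gt0 sc star e \<longrightarrow> (\<exists>k. \<forall>n\<ge>k. c_le sc star (d (s n) x) e))"

definition forward_cauchy ::
  "(complex \<Rightarrow> 'a::ring_1 \<Rightarrow> 'a) \<Rightarrow> ('a \<Rightarrow> 'a) \<Rightarrow> ('x \<Rightarrow> 'x \<Rightarrow> 'a) \<Rightarrow> (nat \<Rightarrow> 'x) \<Rightarrow> bool" where
  "forward_cauchy sc star d s \<longleftrightarrow>
     (\<forall>e. c_gt0 sc star e \<longrightarrow> (\<exists>k. \<forall>n p. k \<le> p \<and> p < n \<longrightarrow> c_le sc star (d (s p) (s n)) e))"

definition backward_cauchy ::
  "(complex \<Rightarrow> 'a::ring_1 \<Rightarrow> 'a) \<Rightarrow> ('a \<Rightarrow> 'a) \<Rightarrow> ('x \<Rightarrow> 'x \<Rightarrow> 'a) \<Rightarrow> (nat \<Rightarrow> 'x) \<Rightarrow> bool" where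
  "backward_cauchy sc star d s \<longleftrightarrow>
     (\<forall>e. c_gt0 sc star e \<longrightarrow> (\<exists>k. \<forall>n p. k \<le> p \<and> p < n \<longrightarrow> c_le sc star (d (s n) (s p)) e))"

definition casym_complete ::
  "(complex \<Rightarrow> 'a::ring_1 \<Rightarrow> 'a) \<Rightarrow> ('a \<Rightarrow> 'a) \<Rightarrow> ('x \<Rightarrow> 'x \<Rightarrow> 'a) \<Rightarrow> bool" where
  "casym_complete sc star d \<longleftrightarrow>
     (\<forall>s. forward_cauchy sc star d s \<longrightarrow> (\<exists>x. forward_conv sc star d s x)) \<and>
     (\<forall>s. backward_cauchy sc star d s \<longrightarrow> (\<exists>x. backward_conv sc star d s x))"

end

(*
  The norm turns the algebra-valued asymmetric metric d into the real-valued one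
  D x y = norm (d x y). For positive elements, 0 <= p <= q implies norm p <= norm q, so D
  satisfies the triangle inequality and D (T x) (T y) <= norm a ^ 2 * D x y. Conversely a
  positive p with norm p <= delta lies below every epsilon >= delta * 1, and every invertible
  positive epsilon dominates some delta * 1 with delta > 0; hence forward and backward Cauchy
  sequences and limits are the same for d and for D. Banach's argument for the real asymmetric
  metric D now applies: the Picard iterates are forward and backward Cauchy, and their forward
  and backward limits coincide and are fixed by T.

  The order facts rest on spectral theory: a self-adjoint element has real spectrum, and its
  norm is its spectral radius.
*)

theory Submission
  imports Defs
begin

section \<open>Contractions of real-valued asymmetric metrics\<close>

text \<open>Backward Cauchy sequences and backward limits for D are the forward ones for the
  flipped distance \<lambda>x y. D y x.\<close>

definition real_forward_cauchy :: "('x \<Rightarrow> 'x \<Rightarrow> real) \<Rightarrow> (nat \<Rightarrow> 'x) \<Rightarrow> bool" where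
  "real_forward_cauchy D s \<longleftrightarrow> (\<forall>\<epsilon>>0. \<exists>k. \<forall>n p. k \<le> p \<and> p < n \<longrightarrow> D (s p) (s n) \<le> \<epsilon>)"

definition real_forward_conv :: "('x \<Rightarrow> 'x \<Rightarrow> real) \<Rightarrow> (nat \<Rightarrow> 'x) \<Rightarrow> 'x \<Rightarrow> bool" where
  "real_forward_conv D s x \<longleftrightarrow> (\<forall>\<epsilon>>0. \<forall>\<^sub>F n in sequentially. D x (s n) \<le> \<epsilon>)"

lemma geometric_chain_bound:
  fixes D :: "'x \<Rightarrow> 'x \<Rightarrow> real" and s :: "nat \<Rightarrow> 'x"
  assumes tri: "\<And>x y z. D x z \<le> D x y + D y z" and refl: "\<And>x. D x x = 0"
    and step: "\<And>n. D (s n) (s (Suc n)) \<le> c * k ^ n"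
    and "0 \<le> c" "0 \<le> k" "k < 1" and "p \<le> n"
  shows "D (s p) (s n) \<le> c * k ^ p / (1 - k)"
proof -
  have partial: "D (s p) (s (p + j)) \<le> c * k ^ p * (\<Sum>i<j. k ^ i)" for j
  proof (induction j)
    case (Suc j)
    have "D (s p) (s (p + Suc j)) \<le> D (s p) (s (p + j)) + D (s (p + j)) (s (Suc (p + j)))"
      using tri by simp
    also have "\<dots> \<le> c * k ^ p * (\<Sum>i<j. k ^ i) + c * k ^ (p + j)"
      using Suc step by (rule add_mono)
    also have "\<dots> = c * k ^ p * (\<Sum>i<Suc j. k ^ i)"
      by (simp add: power_add algebra_simps)
    finally show ?case .
  qed (simp add: refl)
  have "(\<Sum>i<j. k ^ i) \<le> 1 / (1 - k)" for j
  proof -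
    have "(\<Sum>i<j. k ^ i) = (1 - k ^ j) / (1 - k)"
      using \<open>k < 1\<close> by (simp add: sum_gp_strict)
    also have "\<dots> \<le> 1 / (1 - k)"
      using \<open>0 \<le> k\<close> \<open>k < 1\<close> by (intro divide_right_mono) auto
    finally show ?thesis .
  qed
  then have "c * k ^ p * (\<Sum>i<n - p. k ^ i) \<le> c * k ^ p * (1 / (1 - k))"
    using assms(4,5) by (intro mult_left_mono) auto
  then show ?thesis
    using partial[of "n - p"] \<open>p \<le> n\<close> by simp
qed

lemma real_forward_cauchy_iterates:
  fixes D :: "'x \<Rightarrow> 'x \<Rightarrow> real" and T :: "'x \<Rightarrow> 'x"
  assumes nonneg: "\<And>x y. 0 \<le> D x y" and refl: "\<And>x. D x x = 0"
    and tri: "\<And>x y z. D x z \<le> D x y + D y z"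
    and contr: "\<And>x y. D (T x) (T y) \<le> k * D x y" and "0 \<le> k" "k < 1"
  shows "real_forward_cauchy D (\<lambda>n. (T ^^ n) x0)"
  unfolding real_forward_cauchy_def
proof (intro allI impI)
  fix \<epsilon> :: real assume "\<epsilon> > 0"
  define s where "s n = (T ^^ n) x0" for n
  define c where "c = D (s 0) (s 1)"
  have step: "D (s n) (s (Suc n)) \<le> c * k ^ n" for n
  proof (induction n)
    case (Suc n)
    have "D (s (Suc n)) (s (Suc (Suc n))) \<le> k * D (s n) (s (Suc n))"
      using contr by (simp add: s_def)
    also have "\<dots> \<le> k * (c * k ^ n)"
      using Suc \<open>0 \<le> k\<close> by (rule mult_left_mono)
    finally show ?case by (simp add: algebra_simps)
  qed (simp add: c_def)
  have "(\<lambda>p. c * k ^ p / (1 - k)) \<longlonglongrightarrow> 0"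
    using \<open>0 \<le> k\<close> \<open>k < 1\<close> by (intro tendsto_divide_zero tendsto_mult_right_zero LIMSEQ_power_zero) simp
  then have "\<forall>\<^sub>F p in sequentially. c * k ^ p / (1 - k) < \<epsilon>"
    using \<open>\<epsilon> > 0\<close> by (rule order_tendstoD(2))
  then obtain K where K: "\<And>p. p \<ge> K \<Longrightarrow> c * k ^ p / (1 - k) < \<epsilon>"
    unfolding eventually_sequentially by blast
  have "D (s p) (s n) \<le> \<epsilon>" if "K \<le> p" "p < n" for p n
    using geometric_chain_bound[of D s c k p n] tri refl step nonneg \<open>0 \<le> k\<close> \<open>k < 1\<close> K[of p] that
    by (fastforce simp: c_def)
  then show "\<exists>K. \<forall>n p. K \<le> p \<and> p < n \<longrightarrow> D ((T ^^ p) x0) ((T ^^ n) x0) \<le> \<epsilon>"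
    unfolding s_def by blast
qed

theorem real_quasi_metric_fixed_point:
  fixes D :: "'x \<Rightarrow> 'x \<Rightarrow> real" and T :: "'x \<Rightarrow> 'x"
  assumes nonneg: "\<And>x y. 0 \<le> D x y" and eq_0: "\<And>x y. D x y = 0 \<longleftrightarrow> x = y"
    and tri: "\<And>x y z. D x z \<le> D x y + D y z"
    and contr: "\<And>x y. D (T x) (T y) \<le> k * D x y" and "0 \<le> k" "k < 1"
    and forward: "\<And>s. real_forward_cauchy D s \<Longrightarrow> \<exists>x. real_forward_conv D s x"
    and backward: "\<And>s. real_forward_cauchy (\<lambda>x y. D y x) s
                     \<Longrightarrow> \<exists>x. real_forward_conv (\<lambda>x y. D y x) s x"
  shows "\<exists>!x. T x = x"
proof -
  define s where "s n = (T ^^ n) undefined" for n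
  have refl: "D x x = 0" for x using eq_0 by simp
  obtain xf where xf: "real_forward_conv D s xf"
    using forward real_forward_cauchy_iterates[where D = D and T = T, OF nonneg refl tri contr \<open>0 \<le> k\<close> \<open>k < 1\<close>]
    unfolding s_def by blast
  obtain xb where xb: "real_forward_conv (\<lambda>x y. D y x) s xb"
    using backward real_forward_cauchy_iterates[of "\<lambda>x y. D y x"] nonneg refl tri contr
      \<open>0 \<le> k\<close> \<open>k < 1\<close> unfolding s_def by (metis add.commute)
  have close: "\<forall>\<^sub>F n in sequentially. D xf (s n) \<le> \<epsilon> \<and> D (s n) xb \<le> \<epsilon> \<and> D xf (s (Suc n)) \<le> \<epsilon>"
    if "\<epsilon> > 0" for \<epsilon>
  proof -
    have f: "\<forall>\<^sub>F n in sequentially. D xf (s n) \<le> \<epsilon>" and b: "\<forall>\<^sub>F n in sequentially. D (s n) xb \<le> \<epsilon>"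
      using xf xb that unfolding real_forward_conv_def by auto
    moreover have "\<forall>\<^sub>F n in sequentially. D xf (s (Suc n)) \<le> \<epsilon>"
      using f by (rule eventually_sequentially_Suc[THEN iffD2])
    ultimately show ?thesis by (intro eventually_conj)
  qed
  have "D xf xb \<le> 0 + \<epsilon>" if "\<epsilon> > 0" for \<epsilon>
  proof -
    obtain n where "D xf (s n) \<le> \<epsilon> / 2" "D (s n) xb \<le> \<epsilon> / 2"
      using eventually_happens'[OF _ close[of "\<epsilon> / 2"]] \<open>\<epsilon> > 0\<close> by auto
    then show ?thesis using tri[of xf xb "s n"] by simp
  qed
  then have "xf = xb"
    using eq_0 nonneg by (meson field_le_epsilon order_antisym)
  have "D xf (T xf) \<le> 0 + \<epsilon>" if "\<epsilon> > 0" for \<epsilon>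
  proof -
    obtain n where n: "D (s n) xb \<le> \<epsilon> / 2" "D xf (s (Suc n)) \<le> \<epsilon> / 2"
      using eventually_happens'[OF _ close[of "\<epsilon> / 2"]] \<open>\<epsilon> > 0\<close> by auto
    have "D (s (Suc n)) (T xf) \<le> k * D (s n) xf"
      using contr by (simp add: s_def)
    also have "\<dots> \<le> 1 * (\<epsilon> / 2)"
      using n \<open>xf = xb\<close> \<open>0 \<le> k\<close> \<open>k < 1\<close> nonneg by (intro mult_mono) auto
    finally show ?thesis using tri[of xf "T xf" "s (Suc n)"] n by simp
  qed
  then have fixed: "T xf = xf"
    using eq_0 nonneg by (metis field_le_epsilon order_antisym)
  show ?thesis
  proof (rule ex1I[of _ xf])
    fix y assume "T y = y"
    then have "D y xf \<le> k * D y xf" using contr[of y xf] fixed by simp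
    then have "D y xf = 0"
      using \<open>k < 1\<close> nonneg[of y xf] by (metis mult_le_cancel_right1 nle_le not_le)
    then show "y = xf" using eq_0 by blast
  qed (fact fixed)
qed

section \<open>Elementary facts on C*-algebras\<close>

locale cstar =
  fixes sc :: "complex \<Rightarrow> 'a::{real_normed_algebra_1,banach} \<Rightarrow> 'a"
    and star :: "'a \<Rightarrow> 'a"
  assumes cstar_algebra: "cstar_algebra sc star"
begin

definition of_complex :: "complex \<Rightarrow> 'a" where
  "of_complex z = sc z 1"

definition cinv :: "'a \<Rightarrow> 'a" where
  "cinv x = (SOME y. y * x = 1 \<and> x * y = 1)"

abbreviation spectrum :: "'a \<Rightarrow> complex set" where
  "spectrum \<equiv> c_spectrum sc"

abbreviation nonneg :: "'a \<Rightarrow> bool" where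
  "nonneg \<equiv> c_positive sc star"

lemma sc_of_real: "sc (complex_of_real r) x = r *\<^sub>R x"
  using cstar_algebra unfolding cstar_algebra_def by simp

lemma sc_mult: "sc (c1 * c2) x = sc c1 (sc c2 x)"
  using cstar_algebra unfolding cstar_algebra_def by simp

lemma sc_add_left: "sc (c1 + c2) x = sc c1 x + sc c2 x"
  using cstar_algebra unfolding cstar_algebra_def by simp

lemma norm_sc: "norm (sc c x) = cmod c * norm x"
  using cstar_algebra unfolding cstar_algebra_def by simp

lemma sc_mult_left: "sc c (x * y) = sc c x * y"
  and sc_mult_right: "sc c (x * y) = x * sc c y"
proof -
  have "\<forall>c x y. sc c (x * y) = sc c x * y \<and> sc c (x * y) = x * sc c y"
    using cstar_algebra unfolding cstar_algebra_def by (elim conjE) assumption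
  then show "sc c (x * y) = sc c x * y" "sc c (x * y) = x * sc c y" by blast+
qed

lemma star_star [simp]: "star (star x) = x"
  using cstar_algebra unfolding cstar_algebra_def by simp

lemma star_add: "star (x + y) = star x + star y"
  using cstar_algebra unfolding cstar_algebra_def by simp

lemma star_mult: "star (x * y) = star y * star x"
  using cstar_algebra unfolding cstar_algebra_def by simp

lemma star_sc: "star (sc c x) = sc (cnj c) (star x)"
  using cstar_algebra unfolding cstar_algebra_def by simp

lemma norm_star_mult_self: "norm (star x * x) = (norm x)\<^sup>2"
  using cstar_algebra unfolding cstar_algebra_def by simp

lemma sc_eq_of_complex_mult: "sc z x = of_complex z * x"
  unfolding of_complex_def using sc_mult_left[of z 1 x] by simp

lemma of_complex_commute: "of_complex z * x = x * of_complex z"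
  unfolding of_complex_def using sc_mult_left[of z 1 x] sc_mult_right[of z x 1] by simp

lemma of_complex_mult: "of_complex (z * w) = of_complex z * of_complex w"
proof -
  have "of_complex (z * w) = sc z (of_complex w)"
    unfolding of_complex_def by (simp add: sc_mult)
  then show ?thesis by (simp only: sc_eq_of_complex_mult)
qed

lemma of_complex_add: "of_complex (z + w) = of_complex z + of_complex w"
  unfolding of_complex_def by (simp add: sc_add_left)

lemma of_complex_of_real: "of_complex (complex_of_real r) = of_real r"
  unfolding of_complex_def sc_of_real by (simp add: of_real_def)

lemma of_complex_0 [simp]: "of_complex 0 = 0"
  using of_complex_of_real[of 0] by simp

lemma of_complex_1 [simp]: "of_complex 1 = 1"
  using of_complex_of_real[of 1] by simp

lemma of_complex_minus: "of_complex (- z) = - of_complex z"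
  using of_complex_add[of z "- z"] by (simp add: minus_unique)

lemma of_complex_diff: "of_complex (z - w) = of_complex z - of_complex w"
  using of_complex_add[of z "- w"] of_complex_minus[of w] by simp

lemma norm_of_complex: "norm (of_complex z) = cmod z"
  unfolding of_complex_def by (simp add: norm_sc)

lemma scaleR_eq_of_complex_mult: "r *\<^sub>R x = of_complex (complex_of_real r) * x"
  using sc_of_real[of r x] sc_eq_of_complex_mult by simp

lemma power_of_complex_mult: "(of_complex z * x) ^ n = of_complex (z ^ n) * x ^ n"
proof (induction n)
  case (Suc n)
  have "(of_complex z * x) ^ Suc n = (of_complex z * x) * (of_complex (z ^ n) * x ^ n)"
    using Suc by simp
  also have "\<dots> = of_complex z * of_complex (z ^ n) * (x * x ^ n)"
    by (metis of_complex_commute mult.assoc)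
  finally show ?case by (simp add: of_complex_mult)
qed simp

lemma star_1 [simp]: "star 1 = 1"
  using star_mult[of "star 1" 1] by (metis mult_1_right star_star)

lemma star_0 [simp]: "star 0 = 0"
  using star_add[of 0 0] by simp

lemma star_minus: "star (- x) = - star x"
  using star_add[of x "- x"] by (simp add: minus_unique)

lemma star_diff: "star (x - y) = star x - star y"
  using star_add[of x "- y"] star_minus[of y] by simp

lemma star_of_complex: "star (of_complex z) = of_complex (cnj z)"
  unfolding of_complex_def by (simp add: star_sc)

lemma star_scaleR: "star (r *\<^sub>R x) = r *\<^sub>R star x"
  using star_sc[of "complex_of_real r" x] by (simp add: sc_of_real)

lemma star_of_real: "star (of_real r) = of_real r"
  using star_of_complex[of "complex_of_real r"] of_complex_of_real by simp

lemma star_power: "star (x ^ n) = star x ^ n"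
  by (induction n) (auto simp: star_mult power_commutes)

lemma norm_star: "norm (star x) = norm x"
proof -
  have "norm y \<le> norm (star y)" for y
  proof (cases "y = 0")
    case False
    have "norm y ^ 2 \<le> norm (star y) * norm y"
      using norm_star_mult_self[of y] norm_mult_ineq[of "star y" y] by simp
    then show ?thesis using False by (simp add: power2_eq_square)
  qed simp
  from this[of x] this[of "star x"] show ?thesis by simp
qed

lemma norm_power2_self_adjoint:
  assumes "star h = h"
  shows "norm (h ^ 2 ^ m) = norm h ^ 2 ^ m"
proof (induction m)
  case (Suc m)
  have "norm (h ^ 2 ^ Suc m) = norm (star (h ^ 2 ^ m) * h ^ 2 ^ m)"
    using assms by (simp add: star_power power_add[symmetric] mult_2)
  also have "\<dots> = norm (h ^ 2 ^ m) ^ 2"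
    by (rule norm_star_mult_self)
  finally show ?case using Suc by (simp add: power_mult[symmetric] mult.commute)
qed simp

lemma cinv_props:
  assumes "c_invertible x"
  shows cinv_left: "cinv x * x = 1" and cinv_right: "x * cinv x = 1"
  using someI_ex[OF assms[unfolded c_invertible_def]] unfolding cinv_def by blast+

lemma cinv_unique:
  assumes "y * x = 1" "x * y = 1"
  shows "c_invertible x" "cinv x = y"
proof -
  show inv: "c_invertible x" using assms unfolding c_invertible_def by blast
  have "y = y * (x * cinv x)" by (simp add: cinv_right[OF inv])
  also have "\<dots> = cinv x" by (simp add: mult.assoc[symmetric] assms(1))
  finally show "cinv x = y" by simp
qed

lemma c_invertible_mult:
  assumes "c_invertible a" "c_invertible b"
  shows "c_invertible (a * b)" "cinv (a * b) = cinv b * cinv a"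
proof -
  have "(cinv b * cinv a) * (a * b) = cinv b * ((cinv a * a) * b)"
    "(a * b) * (cinv b * cinv a) = a * ((b * cinv b) * cinv a)"
    by (simp_all only: mult.assoc)
  then have "(cinv b * cinv a) * (a * b) = 1" "(a * b) * (cinv b * cinv a) = 1"
    using assms by (simp_all add: cinv_left cinv_right)
  then show "c_invertible (a * b)" "cinv (a * b) = cinv b * cinv a"
    by (rule cinv_unique)+
qed

lemma c_invertible_1: "c_invertible 1"
  unfolding c_invertible_def by auto

lemma not_c_invertible_0: "\<not> c_invertible (0::'a)"
  using cinv_right[of "0::'a"] by auto

lemma c_invertible_minus_iff: "c_invertible (- x) \<longleftrightarrow> c_invertible (x::'a)"
proof -
  have "c_invertible (- y)" if "c_invertible y" for y :: 'a
    using cinv_unique(1)[of "- cinv y" "- y"] cinv_left[OF that] cinv_right[OF that] by simp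
  from this[of x] this[of "- x"] show ?thesis by auto
qed

lemma c_invertible_of_complex:
  assumes "z \<noteq> 0"
  shows "c_invertible (of_complex z)" "cinv (of_complex z) = of_complex (inverse z)"
proof -
  have "of_complex (inverse z) * of_complex z = 1" "of_complex z * of_complex (inverse z) = 1"
    using assms by (simp_all add: of_complex_mult[symmetric])
  then show "c_invertible (of_complex z)" "cinv (of_complex z) = of_complex (inverse z)"
    by (rule cinv_unique)+
qed

lemma c_invertible_of_complex_mult_iff:
  assumes "z \<noteq> 0"
  shows "c_invertible (of_complex z * y) \<longleftrightarrow> c_invertible y"
proof
  assume "c_invertible (of_complex z * y)"
  moreover have "y = of_complex (inverse z) * (of_complex z * y)"
    using assms by (simp add: mult.assoc[symmetric] of_complex_mult[symmetric])
  ultimately show "c_invertible y"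
    using c_invertible_mult(1) c_invertible_of_complex(1) assms by (metis inverse_nonzero_iff_nonzero)
qed (use c_invertible_mult(1) c_invertible_of_complex(1) assms in blast)

lemma cinv_diff:
  assumes "c_invertible a" "c_invertible b"
  shows "cinv a - cinv b = cinv a * (b - a) * cinv b"
proof -
  have "cinv a * (b - a) * cinv b = cinv a * (b * cinv b) - (cinv a * a) * cinv b"
    by (simp add: left_diff_distrib right_diff_distrib mult.assoc)
  then show ?thesis using assms by (simp add: cinv_left cinv_right)
qed

lemma c_invertible_one_minus:
  assumes "norm y < 1"
  shows "c_invertible (1 - y)" "norm (cinv (1 - y)) \<le> 1 / (1 - norm y)"
proof -
  have sn: "summable (\<lambda>n. norm y ^ n)" using assms by (simp add: summable_geometric)
  have sny: "summable (\<lambda>n. norm (y ^ n))"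
    by (rule summable_comparison_test[OF _ sn]) (simp add: norm_power_ineq)
  have sy: "summable (\<lambda>n. y ^ n)" using sny summable_norm_cancel by blast
  define s where "s = (\<Sum>n. y ^ n)"
  have "y * s = s - 1"
  proof -
    have "y * s = (\<Sum>n. y ^ Suc n)" unfolding s_def by (simp add: suminf_mult sy)
    also have "\<dots> = s - 1" unfolding s_def using suminf_split_head[OF sy] by simp
    finally show ?thesis .
  qed
  moreover have "s * y = s - 1"
  proof -
    have "s * y = (\<Sum>n. y ^ n * y)" unfolding s_def by (simp add: suminf_mult2 sy)
    also have "\<dots> = (\<Sum>n. y ^ Suc n)" by (simp only: power_Suc2)
    also have "\<dots> = s - 1" unfolding s_def using suminf_split_head[OF sy] by simp
    finally show ?thesis .
  qed
  ultimately have "s * (1 - y) = 1" "(1 - y) * s = 1"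
    by (simp_all add: algebra_simps)
  then have inv: "c_invertible (1 - y)" "cinv (1 - y) = s"
    by (rule cinv_unique)+
  then show "c_invertible (1 - y)" by simp
  have "norm s \<le> (\<Sum>n. norm (y ^ n))" unfolding s_def using summable_norm[OF sny] .
  also have "\<dots> \<le> (\<Sum>n. norm y ^ n)"
    by (rule suminf_le[OF _ sny sn]) (simp add: norm_power_ineq)
  also have "\<dots> = 1 / (1 - norm y)" using assms by (simp add: suminf_geometric)
  finally show "norm (cinv (1 - y)) \<le> 1 / (1 - norm y)" using inv by simp
qed

lemma c_invertible_diff:
  assumes a: "c_invertible a" and small: "norm (cinv a) * norm c \<le> 1/2"
  shows "c_invertible (a - c)" "norm (cinv (a - c) - cinv a) \<le> 2 * norm (cinv a) ^ 2 * norm c"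
proof -
  define y where "y = cinv a * c"
  have ny: "norm y \<le> 1/2"
    unfolding y_def using norm_mult_ineq[of "cinv a" c] small by linarith
  then have inv_y: "c_invertible (1 - y)" and "norm (cinv (1 - y)) \<le> 1 / (1 - norm y)"
    using c_invertible_one_minus[of y] by auto
  moreover have "1 / (1 - norm y) \<le> 2" using ny by (simp add: field_simps)
  ultimately have bound_y: "norm (cinv (1 - y)) \<le> 2" by linarith
  have factor: "a - c = a * (1 - y)"
    unfolding y_def by (simp add: right_diff_distrib mult.assoc[symmetric] cinv_right[OF a])
  then show inv: "c_invertible (a - c)" using c_invertible_mult(1)[OF a inv_y] by simp
  have "norm (cinv (a - c)) \<le> norm (cinv (1 - y)) * norm (cinv a)"
    unfolding factor c_invertible_mult(2)[OF a inv_y] by (rule norm_mult_ineq)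
  also have "\<dots> \<le> 2 * norm (cinv a)" by (intro mult_right_mono bound_y norm_ge_zero)
  finally have bound: "norm (cinv (a - c)) \<le> 2 * norm (cinv a)" .
  have "norm (cinv (a - c) - cinv a) = norm (cinv (a - c) * c * cinv a)"
    using cinv_diff[OF inv a] by simp
  also have "\<dots> \<le> norm (cinv (a - c)) * norm c * norm (cinv a)"
    by (intro order_trans[OF norm_mult_ineq] mult_right_mono norm_mult_ineq norm_ge_zero)
  also have "\<dots> \<le> (2 * norm (cinv a)) * norm c * norm (cinv a)"
    by (intro mult_right_mono bound) simp_all
  finally show "norm (cinv (a - c) - cinv a) \<le> 2 * norm (cinv a) ^ 2 * norm c"
    by (simp add: power2_eq_square mult_ac)
qed

lemma continuous_on_cinv: "continuous_on {y. c_invertible y} cinv"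
  unfolding continuous_on_iff
proof (intro ballI allI impI)
  fix y0 :: 'a and \<epsilon> :: real
  assume y0: "y0 \<in> {y. c_invertible y}" and "0 < \<epsilon>"
  define M where "M = norm (cinv y0) + 1"
  have "0 < M" "norm (cinv y0) \<le> M" unfolding M_def by (simp_all add: add_nonneg_pos)
  define \<delta> where "\<delta> = min (1 / (2 * M)) (\<epsilon> / (2 * M ^ 2))"
  have "dist (cinv y) (cinv y0) < \<epsilon>" if "dist y y0 < \<delta>" for y
  proof -
    define c where "c = y0 - y"
    have c: "norm c < \<delta>" using that by (simp add: c_def dist_norm norm_minus_commute)
    have "norm (cinv y0) * norm c \<le> M * (1 / (2 * M))"
      using c \<open>norm (cinv y0) \<le> M\<close> \<open>0 < M\<close> by (intro mult_mono) (auto simp: \<delta>_def)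
    then have "norm (cinv y0) * norm c \<le> 1/2" using \<open>0 < M\<close> by simp
    then have "norm (cinv (y0 - c) - cinv y0) \<le> 2 * norm (cinv y0) ^ 2 * norm c"
      using c_invertible_diff(2) y0 by blast
    also have "\<dots> \<le> 2 * M ^ 2 * norm c"
      using \<open>norm (cinv y0) \<le> M\<close> by (intro mult_right_mono mult_left_mono power_mono) auto
    also have "\<dots> < 2 * M ^ 2 * \<delta>" using c \<open>0 < M\<close> by simp
    also have "\<dots> \<le> 2 * M ^ 2 * (\<epsilon> / (2 * M ^ 2))"
      using \<open>0 < M\<close> by (intro mult_left_mono) (auto simp: \<delta>_def)
    also have "\<dots> = \<epsilon>" using \<open>0 < M\<close> by simp
    finally show ?thesis by (simp add: c_def dist_norm)
  qed
  moreover have "0 < \<delta>" using \<open>0 < M\<close> \<open>0 < \<epsilon>\<close> by (simp add: \<delta>_def)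
  ultimately show "\<exists>\<delta>>0. \<forall>y\<in>{y. c_invertible y}. dist y y0 < \<delta> \<longrightarrow> dist (cinv y) (cinv y0) < \<epsilon>"
    by blast
qed

lemma continuous_on_of_complex: "continuous_on S of_complex"
  unfolding continuous_on_iff dist_norm
proof (intro ballI allI impI)
  fix l0 :: complex and \<epsilon> :: real
  assume "0 < \<epsilon>"
  have "norm (of_complex l - of_complex l0) = norm (l - l0)" for l
    by (simp add: of_complex_diff[symmetric] norm_of_complex)
  then show "\<exists>d>0. \<forall>l\<in>S. norm (l - l0) < d \<longrightarrow> norm (of_complex l - of_complex l0) < \<epsilon>"
    using \<open>0 < \<epsilon>\<close> by auto
qed

lemma lipschitz_on_resolvent:
  assumes "compact S" and inv: "\<And>l. l \<in> S \<Longrightarrow> c_invertible (1 - of_complex l * x)"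
  obtains L where "L-lipschitz_on S (\<lambda>l. cinv (1 - of_complex l * x))"
proof -
  let ?R = "\<lambda>l. cinv (1 - of_complex l * x)"
  have "continuous_on S ?R"
    using inv by (intro continuous_on_compose2[OF continuous_on_cinv]
        continuous_intros continuous_on_of_complex) auto
  then have "bounded (?R ` S)"
    using \<open>compact S\<close> by (intro compact_imp_bounded compact_continuous_image)
  then obtain K where K: "\<And>l. l \<in> S \<Longrightarrow> norm (?R l) \<le> K" and "0 < K"
    unfolding bounded_pos by blast
  have "(K ^ 2 * norm x)-lipschitz_on S ?R"
  proof (rule lipschitz_onI)
    fix a b assume ab: "a \<in> S" "b \<in> S"
    have "?R a - ?R b = ?R a * (of_complex (a - b) * x) * ?R b"
      using cinv_diff[OF inv inv, OF ab] by (simp add: of_complex_diff left_diff_distrib)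
    then have "norm (?R a - ?R b) \<le> norm (?R a * (of_complex (a - b) * x)) * norm (?R b)"
      by (simp only: norm_mult_ineq)
    also have "\<dots> \<le> norm (?R a) * (cmod (a - b) * norm x) * norm (?R b)"
      using norm_mult_ineq[of "of_complex (a - b)" x]
      by (intro mult_right_mono order_trans[OF norm_mult_ineq] mult_left_mono)
        (simp_all add: norm_of_complex)
    also have "\<dots> \<le> K * (cmod (a - b) * norm x) * K"
      using K ab \<open>0 < K\<close> by (intro mult_mono) auto
    finally show "dist (?R a) (?R b) \<le> K ^ 2 * norm x * dist a b"
      by (simp add: dist_norm power2_eq_square mult_ac)
  qed simp
  then show thesis by (rule that)
qed

lemma cinv_mult_of_add_eq_2:
  assumes A: "c_invertible A" and B: "c_invertible B" and comm: "A * B = B * A" and sum: "A + B = 2"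
  shows "c_invertible (A * B)" "cinv (A * B) = (1/2) *\<^sub>R (cinv A + cinv B)"
proof -
  have half: "(1/2::real) *\<^sub>R (2::'a) = 1"
  proof -
    have "(1/2::real) *\<^sub>R (2::'a) = of_real (1/2) * of_real 2"
      by (simp add: scaleR_conv_of_real)
    also have "\<dots> = of_real (1/2 * 2)" by (simp only: of_real_mult)
    finally show ?thesis by simp
  qed
  have "(cinv A + cinv B) * (A * B) = (cinv A * A) * B + cinv B * (B * A)"
    by (simp add: algebra_simps comm)
  also have "\<dots> = 2" using sum by (simp add: cinv_left[OF A] mult.assoc[symmetric] cinv_left[OF B] add.commute)
  finally have left: "((1/2) *\<^sub>R (cinv A + cinv B)) * (A * B) = 1" using half by simp
  have "(A * B) * (cinv A + cinv B) = (A * B) * cinv A + (A * B) * cinv B"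
    by (simp only: distrib_left)
  also have "\<dots> = (B * A) * cinv A + A * (B * cinv B)"
    by (subst (1) comm, simp only: mult.assoc)
  also have "\<dots> = 2" using sum by (simp add: cinv_right[OF A] mult.assoc cinv_right[OF B] add.commute)
  finally have right: "(A * B) * ((1/2) *\<^sub>R (cinv A + cinv B)) = 1" using half by simp
  from left right show "c_invertible (A * B)" "cinv (A * B) = (1/2) *\<^sub>R (cinv A + cinv B)"
    by (rule cinv_unique)+
qed

lemma lipschitz_on_resolvent_power_double:
  assumes z: "z ^ N = -1" "cmod z = 1" and rot: "\<And>l. l \<in> S \<Longrightarrow> l * z \<in> S"
    and inv: "\<forall>l\<in>S. c_invertible (1 - (of_complex l * x) ^ N)"
    and lip: "L-lipschitz_on S (\<lambda>l. cinv (1 - (of_complex l * x) ^ N))"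
  shows "\<forall>l\<in>S. c_invertible (1 - (of_complex l * x) ^ (2 * N))"
    and "L-lipschitz_on S (\<lambda>l. cinv (1 - (of_complex l * x) ^ (2 * N)))"
proof -
  let ?R = "\<lambda>l. cinv (1 - (of_complex l * x) ^ N)"
  have rotate: "(of_complex (l * z) * x) ^ N = - ((of_complex l * x) ^ N)" for l
    by (simp add: power_of_complex_mult power_mult_distrib z of_complex_minus)
  have split: "1 - (of_complex l * x) ^ (2 * N)
      = (1 - (of_complex l * x) ^ N) * (1 - (of_complex (l * z) * x) ^ N)" for l
  proof -
    have "(of_complex l * x) ^ (2 * N) = (of_complex l * x) ^ N * (of_complex l * x) ^ N"
      by (simp add: mult_2 power_add)
    then show ?thesis unfolding rotate by (simp add: algebra_simps)
  qed
  have double: "c_invertible (1 - (of_complex l * x) ^ (2 * N))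
      \<and> cinv (1 - (of_complex l * x) ^ (2 * N)) = (1/2) *\<^sub>R (?R l + ?R (l * z))"
    if "l \<in> S" for l
  proof -
    let ?A = "1 - (of_complex l * x) ^ N" and ?B = "1 - (of_complex (l * z) * x) ^ N"
    have "c_invertible ?A" "c_invertible ?B" using inv that rot by auto
    moreover have "?A * ?B = ?B * ?A" "?A + ?B = 2"
      unfolding rotate by (simp_all add: algebra_simps)
    ultimately show ?thesis unfolding split using cinv_mult_of_add_eq_2 by blast
  qed
  then show "\<forall>l\<in>S. c_invertible (1 - (of_complex l * x) ^ (2 * N))" by blast
  show "L-lipschitz_on S (\<lambda>l. cinv (1 - (of_complex l * x) ^ (2 * N)))"
  proof (rule lipschitz_onI)
    fix a b assume ab: "a \<in> S" "b \<in> S"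
    have "norm (?R (a * z) - ?R (b * z)) \<le> L * norm (a * z - b * z)"
      using lipschitz_on_normD[OF lip rot rot] ab by blast
    also have "norm (a * z - b * z) = norm (a - b)"
      by (simp add: left_diff_distrib[symmetric] norm_mult z)
    finally have bound: "norm ((?R a - ?R b) + (?R (a * z) - ?R (b * z)))
        \<le> L * norm (a - b) + L * norm (a - b)"
      using lipschitz_on_normD[OF lip ab] by (intro norm_triangle_le add_mono)
    have "cinv (1 - (of_complex a * x) ^ (2 * N)) - cinv (1 - (of_complex b * x) ^ (2 * N))
        = (1/2) *\<^sub>R (?R a + ?R (a * z)) - (1/2) *\<^sub>R (?R b + ?R (b * z))"
      using double ab by simp
    also have "\<dots> = (1/2) *\<^sub>R ((?R a - ?R b) + (?R (a * z) - ?R (b * z)))"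
      by (simp only: scaleR_right_diff_distrib[symmetric] add_diff_add)
    finally show "dist (cinv (1 - (of_complex a * x) ^ (2 * N)))
        (cinv (1 - (of_complex b * x) ^ (2 * N))) \<le> L * dist a b"
      using bound by (simp add: dist_norm)
  qed (rule lipschitz_on_nonneg[OF lip])
qed

lemma norm_cinv_one_minus_diff_one_plus:
  assumes u: "norm u = 1" and inv: "c_invertible (1 - u)" "c_invertible (1 + u)"
  shows "1 \<le> 2 * norm (cinv (1 - u) - cinv (1 + u))"
proof -
  define D where "D = cinv (1 - u) - cinv (1 + u)"
  have "(1 - u) * D * (1 + u) = ((1 - u) * cinv (1 - u)) * ((1 + u) - (1 - u)) * (cinv (1 + u) * (1 + u))"
    unfolding D_def cinv_diff[OF inv] by (simp only: mult.assoc)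
  then have eq: "(1 - u) * D * (1 + u) = 2 *\<^sub>R u"
    by (simp add: cinv_right[OF inv(1)] cinv_left[OF inv(2)] scaleR_2)
  have "2 = norm ((1 - u) * D * (1 + u))" unfolding eq using u by simp
  also have "\<dots> \<le> norm (1 - u) * norm D * norm (1 + u)"
    by (intro order_trans[OF norm_mult_ineq] mult_right_mono norm_mult_ineq norm_ge_zero)
  also have "\<dots> \<le> 2 * norm D * 2"
    using norm_triangle_ineq4[of 1 u] norm_triangle_ineq[of 1 u] u
    by (intro mult_mono) simp_all
  finally show ?thesis unfolding D_def by simp
qed

lemma cis_pi_divide_power:
  assumes "0 < N"
  shows "cis (pi / real N) ^ N = -1"
proof -
  have "cis (pi / real N) ^ N = cis (real N * (pi / real N))" by (rule Complex.DeMoivre)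
  then show ?thesis using assms by simp
qed

text \<open>If 1 - l x were invertible for all l in the closed unit disc, the resolvent
  l \<mapsto> cinv (1 - l x) would be Lipschitz there. Since 1 / (1 - w ^ 2N) is the mean of
  1 / (1 - w ^ N) and 1 / (1 + w ^ N), and w ^ N changes sign when l is multiplied by a
  root z of z ^ N = -1, the resolvents of x ^ 2 ^ m are Lipschitz with the same constant. But
  x ^ 2 ^ m still has norm 1, so its resolvents at l = 1 and at a root of -1 close to 1 are far
  apart.\<close>
lemma self_adjoint_resolvent_not_invertible:
  assumes sa: "star x = x" and nx: "norm x = 1"
  shows "\<exists>l. cmod l \<le> 1 \<and> \<not> c_invertible (1 - of_complex l * x)"
proof (rule ccontr)
  assume "\<not> ?thesis"
  then have inv: "\<And>l. l \<in> cball 0 1 \<Longrightarrow> c_invertible (1 - of_complex l * x)" by auto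
  obtain L where L: "L-lipschitz_on (cball 0 1) (\<lambda>l. cinv (1 - of_complex l * x))"
    using lipschitz_on_resolvent[OF compact_cball inv] by blast
  have powers: "(\<forall>l\<in>cball 0 1. c_invertible (1 - (of_complex l * x) ^ 2 ^ m))
      \<and> L-lipschitz_on (cball 0 1) (\<lambda>l. cinv (1 - (of_complex l * x) ^ 2 ^ m))" for m
  proof (induction m)
    case (Suc m)
    have "cis (pi / 2 ^ m) ^ 2 ^ m = -1" using cis_pi_divide_power[of "2 ^ m"] by simp
    then show ?case
      using lipschitz_on_resolvent_power_double[of "cis (pi / 2 ^ m)" "2 ^ m" "cball 0 1" x L] Suc
      by (simp add: norm_mult)
  qed (use inv L in simp)
  have "(\<lambda>m. cis (pi / 2 ^ m)) \<longlonglongrightarrow> cis 0"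
    by (intro tendsto_cis LIMSEQ_divide_realpow_zero) simp
  moreover have "0 < 1 / (2 * L + 1)"
    using lipschitz_on_nonneg[OF L] by (simp add: add_nonneg_pos)
  ultimately obtain m where m: "norm (cis (pi / 2 ^ m) - 1) < 1 / (2 * L + 1)"
    using LIMSEQ_D by fastforce
  define z where "z = cis (pi / 2 ^ m)"
  define u where "u = x ^ 2 ^ m"
  have "norm u = 1" unfolding u_def using norm_power2_self_adjoint[OF sa] nx by simp
  have "(of_complex z * x) ^ 2 ^ m = - u"
    using cis_pi_divide_power[of "2 ^ m"] by (simp add: z_def u_def power_of_complex_mult of_complex_minus)
  moreover have "1 \<in> cball (0::complex) 1" "z \<in> cball 0 1" by (simp_all add: z_def)
  ultimately have "c_invertible (1 - u)" "c_invertible (1 + u)"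
    and "norm (cinv (1 - u) - cinv (1 + u)) \<le> L * norm (1 - z)"
    using powers[of m] lipschitz_on_normD[OF conjunct2[OF powers[of m]]] by (fastforce simp: u_def)+
  then have "1 \<le> 2 * (L * norm (1 - z))"
    using norm_cinv_one_minus_diff_one_plus[OF \<open>norm u = 1\<close>] by force
  also have "\<dots> \<le> 2 * (L * (1 / (2 * L + 1)))"
    using m lipschitz_on_nonneg[OF L]
    by (intro mult_left_mono) (simp_all add: z_def norm_minus_commute)
  also have "\<dots> < 1"
    using lipschitz_on_nonneg[OF L] by (simp add: field_simps)
  finally show False by simp
qed

lemma mem_spectrum_iff: "z \<in> spectrum x \<longleftrightarrow> \<not> c_invertible (x - of_complex z)"
  unfolding c_spectrum_def of_complex_def by simp

lemma norm_le_of_mem_spectrum: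
  assumes "z \<in> spectrum x"
  shows "cmod z \<le> norm x"
proof (rule ccontr)
  assume "\<not> cmod z \<le> norm x"
  then have lt: "norm x < cmod z" and "z \<noteq> 0" by auto
  have "norm (of_complex (inverse z) * x) \<le> cmod (inverse z) * norm x"
    using norm_mult_ineq[of "of_complex (inverse z)" x] by (simp add: norm_of_complex)
  also have "\<dots> = norm x / cmod z"
    by (simp add: norm_inverse divide_inverse mult.commute)
  also have "\<dots> < 1"
    using lt \<open>z \<noteq> 0\<close> by simp
  finally have "c_invertible (of_complex (- z) * (1 - of_complex (inverse z) * x))"
    using c_invertible_one_minus(1) c_invertible_of_complex_mult_iff \<open>z \<noteq> 0\<close> by simp
  moreover have "of_complex (- z) * (1 - of_complex (inverse z) * x) = x - of_complex z"
    using \<open>z \<noteq> 0\<close>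
    by (simp add: algebra_simps mult.assoc[symmetric] of_complex_mult[symmetric] of_complex_minus)
  ultimately show False using assms mem_spectrum_iff by simp
qed

lemma mem_spectrum_add_of_complex: "z \<in> spectrum (x + of_complex w) \<longleftrightarrow> z - w \<in> spectrum x"
  unfolding mem_spectrum_iff by (simp add: of_complex_diff algebra_simps)

lemma mem_spectrum_of_real_diff:
  "z \<in> spectrum (of_real t - x) \<longleftrightarrow> complex_of_real t - z \<in> spectrum x"
proof -
  have "of_real t - x - of_complex z = - (x - of_complex (complex_of_real t - z))"
    by (simp add: of_complex_diff of_complex_of_real)
  then show ?thesis by (simp only: mem_spectrum_iff c_invertible_minus_iff)
qed

lemma spectrum_of_complex: "spectrum (of_complex w) = {w}"
proof (intro set_eqI iffI)
  fix z assume "z \<in> spectrum (of_complex w)"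
  then have "\<not> c_invertible (of_complex (w - z))"
    by (simp add: mem_spectrum_iff of_complex_diff)
  then show "z \<in> {w}" using c_invertible_of_complex(1)[of "w - z"] by auto
next
  fix z assume "z \<in> {w}"
  then show "z \<in> spectrum (of_complex w)" using not_c_invertible_0 by (simp add: mem_spectrum_iff)
qed

lemma norm_le_if_spectrum_le:
  assumes sa: "star h = h" and sp: "\<And>z. z \<in> spectrum h \<Longrightarrow> cmod z \<le> r"
  shows "norm h \<le> r"
proof (cases "h = 0")
  case True
  have "0 \<in> spectrum h" unfolding mem_spectrum_iff True using not_c_invertible_0 by simp
  then show ?thesis using sp[of 0] True by simp
next
  case False
  define x where "x = (1 / norm h) *\<^sub>R h"
  have "star x = x" unfolding x_def by (simp add: star_scaleR sa)
  moreover have "norm x = 1" unfolding x_def using False by simp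
  ultimately obtain l where "cmod l \<le> 1" and not_inv: "\<not> c_invertible (1 - of_complex l * x)"
    using self_adjoint_resolvent_not_invertible by blast
  then have "l \<noteq> 0" using c_invertible_1 by auto
  define w where "w = complex_of_real (norm h) / l"
  have "of_complex (- l / complex_of_real (norm h)) * (h - of_complex w) = 1 - of_complex l * x"
  proof -
    have "of_complex (- l / complex_of_real (norm h)) * of_complex w = - 1"
      unfolding of_complex_mult[symmetric] w_def using \<open>l \<noteq> 0\<close> False by (simp add: of_complex_minus)
    moreover have "of_complex l * x = of_complex (l / complex_of_real (norm h)) * h"
      unfolding x_def scaleR_eq_of_complex_mult
      by (simp add: mult.assoc[symmetric] of_complex_mult[symmetric] divide_inverse)
    ultimately show ?thesis by (simp add: algebra_simps of_complex_minus)
  qed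
  then have "w \<in> spectrum h"
    using not_inv c_invertible_of_complex_mult_iff[of "- l / complex_of_real (norm h)" "h - of_complex w"]
      \<open>l \<noteq> 0\<close> False by (simp add: mem_spectrum_iff)
  then have "cmod w \<le> r" by (rule sp)
  moreover have "norm h \<le> cmod w"
    using \<open>cmod l \<le> 1\<close> \<open>l \<noteq> 0\<close> False
    by (simp add: w_def norm_divide field_simps mult_left_le)
  ultimately show ?thesis by linarith
qed

lemma norm_self_adjoint_add_imaginary:
  assumes sa: "star h = h"
  shows "norm (h + of_complex (\<i> * complex_of_real s)) ^ 2 \<le> norm h ^ 2 + s ^ 2"
proof -
  define c where "c = \<i> * complex_of_real s"
  have "star (h + of_complex c) * (h + of_complex c) = h * h + of_complex (complex_of_real (s ^ 2))"
  proof -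
    have "star (h + of_complex c) * (h + of_complex c)
        = h * h + (h * of_complex c - of_complex c * h) - of_complex c * of_complex c"
      using sa by (simp add: star_add star_of_complex c_def of_complex_minus algebra_simps)
    also have "\<dots> = h * h - of_complex (c * c)"
      by (simp add: of_complex_commute[of c h] of_complex_mult)
    also have "c * c = - complex_of_real (s ^ 2)"
      unfolding c_def by (simp add: power2_eq_square algebra_simps)
    finally show ?thesis by (simp add: of_complex_minus)
  qed
  then have "norm (h + of_complex c) ^ 2 = norm (h * h + of_complex (complex_of_real (s ^ 2)))"
    using norm_star_mult_self[of "h + of_complex c"] by simp
  also have "\<dots> \<le> norm (h * h) + s ^ 2"
    using norm_triangle_ineq[of "h * h" "of_complex (complex_of_real (s ^ 2))"]
    by (simp add: norm_of_complex norm_power)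
  also have "norm (h * h) = norm h ^ 2"
    using norm_star_mult_self[of h] sa by simp
  finally show ?thesis unfolding c_def .
qed

text \<open>For z in the spectrum, cmod (z + i s) ^ 2 grows like s ^ 2 + 2 s Im z, faster than the
  bound norm h ^ 2 + s ^ 2 of the previous lemma once s Im z is large.\<close>
lemma spectrum_self_adjoint_real:
  assumes sa: "star h = h" and z: "z \<in> spectrum h"
  shows "Im z = 0"
proof (rule ccontr)
  assume "Im z \<noteq> 0"
  define s where "s = (norm h ^ 2 + 1) / (2 * Im z)"
  have "z + \<i> * complex_of_real s \<in> spectrum (h + of_complex (\<i> * complex_of_real s))"
    using z by (simp add: mem_spectrum_add_of_complex)
  then have "cmod (z + \<i> * complex_of_real s) ^ 2 \<le> norm (h + of_complex (\<i> * complex_of_real s)) ^ 2"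
    by (intro power_mono norm_le_of_mem_spectrum) simp_all
  also have "\<dots> \<le> norm h ^ 2 + s ^ 2"
    by (rule norm_self_adjoint_add_imaginary[OF sa])
  finally have "Re z ^ 2 + (Im z + s) ^ 2 \<le> norm h ^ 2 + s ^ 2"
    by (simp add: cmod_power2)
  moreover have "2 * Im z * s = norm h ^ 2 + 1"
    unfolding s_def using \<open>Im z \<noteq> 0\<close> by simp
  ultimately have "Re z ^ 2 + Im z ^ 2 + 1 \<le> 0"
    by (simp add: power2_eq_square algebra_simps)
  then show False
    by (smt (verit) zero_le_power2)
qed

lemma nonneg_iff: "nonneg x \<longleftrightarrow> star x = x \<and> (\<forall>z\<in>spectrum x. Im z = 0 \<and> 0 \<le> Re z)"
proof -
  have "z \<in> {complex_of_real r | r. r \<ge> 0} \<longleftrightarrow> Im z = 0 \<and> 0 \<le> Re z" for z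
  proof
    assume "Im z = 0 \<and> 0 \<le> Re z"
    then have "z = complex_of_real (Re z)" "0 \<le> Re z" by (simp_all add: complex_eq_iff)
    then show "z \<in> {complex_of_real r | r. r \<ge> 0}" by blast
  qed auto
  then show ?thesis unfolding c_positive_def by blast
qed

lemma nonneg_of_real: "0 \<le> r \<Longrightarrow> nonneg (of_real r)"
  unfolding nonneg_iff using spectrum_of_complex[of "complex_of_real r"]
  by (simp add: of_complex_of_real star_of_real)

lemma nonneg_of_real_diff:
  assumes "nonneg a" "norm a \<le> t"
  shows "nonneg (of_real t - a)"
  unfolding nonneg_iff
proof (intro conjI ballI)
  show "star (of_real t - a) = of_real t - a"
    using assms(1) by (simp add: nonneg_iff star_diff star_of_real)
  fix z assume "z \<in> spectrum (of_real t - a)"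
  then have w: "complex_of_real t - z \<in> spectrum a" by (simp add: mem_spectrum_of_real_diff)
  then have "Im (complex_of_real t - z) = 0" "0 \<le> Re (complex_of_real t - z)"
    using assms(1) nonneg_iff by blast+
  moreover have "\<bar>Re (complex_of_real t - z)\<bar> \<le> t"
    using abs_Re_le_cmod[of "complex_of_real t - z"] norm_le_of_mem_spectrum[OF w] assms(2)
    by linarith
  ultimately show "Im z = 0" "0 \<le> Re z" by auto
qed

lemma norm_of_real_diff_le:
  assumes "nonneg a" "norm a \<le> t"
  shows "norm (of_real t - a) \<le> t"
proof (rule norm_le_if_spectrum_le)
  show "star (of_real t - a) = of_real t - a"
    using assms(1) by (simp add: nonneg_iff star_diff star_of_real)
  fix z assume z: "z \<in> spectrum (of_real t - a)"
  then have "Im z = 0" "0 \<le> Re z"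
    using nonneg_of_real_diff[OF assms] nonneg_iff by blast+
  moreover have "complex_of_real t - z \<in> spectrum a"
    using z by (simp add: mem_spectrum_of_real_diff)
  then have "0 \<le> Re (complex_of_real t - z)"
    using assms(1) nonneg_iff by blast
  ultimately show "cmod z \<le> t" by (simp add: cmod_eq_Re)
qed

lemma nonneg_if_norm_of_real_diff_le:
  assumes sa: "star a = a" and "norm (of_real t - a) \<le> t"
  shows "nonneg a"
  unfolding nonneg_iff
proof (intro conjI ballI sa)
  fix z assume z: "z \<in> spectrum a"
  then have "complex_of_real t - z \<in> spectrum (of_real t - a)"
    by (simp add: mem_spectrum_of_real_diff)
  from norm_le_of_mem_spectrum[OF this] assms(2)
  have "cmod (complex_of_real t - z) \<le> t" by (rule order_trans)
  then have "\<bar>Re (complex_of_real t - z)\<bar> \<le> t"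
    using abs_Re_le_cmod[of "complex_of_real t - z"] by linarith
  then show "Im z = 0" "0 \<le> Re z"
    using spectrum_self_adjoint_real[OF sa z] by auto
qed

text \<open>Positivity of a is equivalent to norm (t - a) \<le> t for any t \<ge> norm a, a condition
  that is stable under sums by the triangle inequality.\<close>
lemma nonneg_add:
  assumes a: "nonneg a" and b: "nonneg b"
  shows "nonneg (a + b)"
proof (rule nonneg_if_norm_of_real_diff_le)
  show "star (a + b) = a + b" using a b by (simp add: nonneg_iff star_add)
  have "norm (of_real (norm a + norm b) - (a + b))
      = norm ((of_real (norm a) - a) + (of_real (norm b) - b))"
    by (simp add: algebra_simps)
  also have "\<dots> \<le> norm a + norm b"
    using norm_of_real_diff_le[OF a order_refl] norm_of_real_diff_le[OF b order_refl]
    by (intro order_trans[OF norm_triangle_ineq] add_mono)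
  finally show "norm (of_real (norm a + norm b) - (a + b)) \<le> norm a + norm b" .
qed

lemma norm_le_if_c_le:
  assumes a: "nonneg a" and le: "c_le sc star a b"
  shows "norm a \<le> norm b"
proof (rule norm_le_if_spectrum_le)
  show "star a = a" using a nonneg_iff by blast
  have "nonneg b" using nonneg_add[OF a le[unfolded c_le_def]] by simp
  then have "nonneg ((of_real (norm b) - b) + (b - a))"
    using nonneg_add[OF nonneg_of_real_diff[OF _ order_refl] le[unfolded c_le_def]] by blast
  then have "nonneg (of_real (norm b) - a)" by simp
  fix z assume z: "z \<in> spectrum a"
  then have "Im z = 0" "0 \<le> Re z" using a nonneg_iff by blast+
  moreover have "0 \<le> Re (complex_of_real (norm b) - z)"
    using z \<open>nonneg (of_real (norm b) - a)\<close> nonneg_iff mem_spectrum_of_real_diff by fastforce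
  ultimately show "cmod z \<le> norm b" by (simp add: cmod_eq_Re)
qed

lemma c_le_if_norm_le:
  assumes p: "nonneg p" and "norm p \<le> \<delta>" and "c_le sc star (of_real \<delta>) \<epsilon>"
  shows "c_le sc star p \<epsilon>"
proof -
  have "\<epsilon> - p = (\<epsilon> - of_real \<delta>) + (of_real (\<delta> - norm p) + (of_real (norm p) - p))"
    by (simp add: of_real_diff algebra_simps)
  moreover have "nonneg (of_real (\<delta> - norm p))"
    using \<open>norm p \<le> \<delta>\<close> by (intro nonneg_of_real) simp
  then have "nonneg ((\<epsilon> - of_real \<delta>) + (of_real (\<delta> - norm p) + (of_real (norm p) - p)))"
    using assms(3) nonneg_of_real_diff[OF p order_refl]
    unfolding c_le_def by (intro nonneg_add)
  ultimately show ?thesis unfolding c_le_def by simp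
qed

lemma c_gt0_of_real: "0 < r \<Longrightarrow> c_gt0 sc star (of_real r)"
  unfolding c_gt0_def
  using nonneg_of_real[of r] c_invertible_of_complex(1)[of "complex_of_real r"]
  by (simp add: of_complex_of_real)

lemma c_gt0_imp_c_le_of_real:
  assumes "c_gt0 sc star \<epsilon>"
  obtains \<delta> where "0 < \<delta>" "c_le sc star (of_real \<delta>) \<epsilon>"
proof -
  have p: "nonneg \<epsilon>" and inv: "c_invertible \<epsilon>" using assms unfolding c_gt0_def by auto
  define \<delta> where "\<delta> = 1 / (2 * (norm (cinv \<epsilon>) + 1))"
  have "0 < \<delta>" unfolding \<delta>_def by (simp add: add_nonneg_pos)
  have far: "\<delta> < cmod z" if z: "z \<in> spectrum \<epsilon>" for z
  proof (rule ccontr)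
    assume "\<not> \<delta> < cmod z"
    then have "norm (cinv \<epsilon>) * norm (of_complex z) \<le> norm (cinv \<epsilon>) * \<delta>"
      by (intro mult_left_mono) (auto simp: norm_of_complex)
    also have "\<dots> \<le> 1/2"
      unfolding \<delta>_def by (simp add: divide_le_eq) (use norm_ge_zero[of "cinv \<epsilon>"] in linarith)
    finally have "c_invertible (\<epsilon> - of_complex z)" using c_invertible_diff(1)[OF inv] by blast
    then show False using z mem_spectrum_iff by blast
  qed
  have "nonneg (\<epsilon> - of_real \<delta>)"
    unfolding nonneg_iff
  proof (intro conjI ballI)
    show "star (\<epsilon> - of_real \<delta>) = \<epsilon> - of_real \<delta>"
      using p by (simp add: nonneg_iff star_diff star_of_real)
    fix w assume "w \<in> spectrum (\<epsilon> - of_real \<delta>)"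
    then have wz: "w + complex_of_real \<delta> \<in> spectrum \<epsilon>"
      using mem_spectrum_add_of_complex[of w \<epsilon> "- complex_of_real \<delta>"]
      by (simp add: of_complex_minus of_complex_of_real)
    then have "Im (w + complex_of_real \<delta>) = 0" "0 \<le> Re (w + complex_of_real \<delta>)"
      using p nonneg_iff by blast+
    moreover have "\<delta> < cmod (w + complex_of_real \<delta>)" by (rule far[OF wz])
    ultimately show "Im w = 0" "0 \<le> Re w" by (simp_all add: cmod_eq_Re)
  qed
  then show thesis using that \<open>0 < \<delta>\<close> unfolding c_le_def by blast
qed

lemma norm_star_mult_mult: "norm (star a * p * a) \<le> norm a ^ 2 * norm p"
proof -
  have "norm (star a * p * a) \<le> norm (star a) * norm p * norm a"
    by (intro order_trans[OF norm_mult_ineq] mult_right_mono norm_mult_ineq norm_ge_zero)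
  then show ?thesis by (simp add: norm_star power2_eq_square mult_ac)
qed

lemma forward_cauchy_if_real_forward_cauchy:
  assumes pos: "\<And>x y. nonneg (d x y)" and "real_forward_cauchy (\<lambda>x y. norm (d x y)) s"
  shows "forward_cauchy sc star d s"
  unfolding forward_cauchy_def
proof (intro allI impI)
  fix \<epsilon> assume "c_gt0 sc star \<epsilon>"
  then obtain \<delta> where "0 < \<delta>" and \<delta>: "c_le sc star (of_real \<delta>) \<epsilon>"
    by (rule c_gt0_imp_c_le_of_real)
  then obtain k where "\<forall>n p. k \<le> p \<and> p < n \<longrightarrow> norm (d (s p) (s n)) \<le> \<delta>"
    using assms(2) unfolding real_forward_cauchy_def by blast
  then show "\<exists>k. \<forall>n p. k \<le> p \<and> p < n \<longrightarrow> c_le sc star (d (s p) (s n)) \<epsilon>"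
    using c_le_if_norm_le[OF pos _ \<delta>] by blast
qed

lemma real_forward_conv_if_forward_conv:
  assumes pos: "\<And>x y. nonneg (d x y)" and "forward_conv sc star d s x"
  shows "real_forward_conv (\<lambda>x y. norm (d x y)) s x"
  unfolding real_forward_conv_def eventually_sequentially
proof (intro allI impI)
  fix \<epsilon> :: real assume "0 < \<epsilon>"
  then obtain k where "\<forall>n\<ge>k. c_le sc star (d x (s n)) (of_real \<epsilon>)"
    using assms(2) c_gt0_of_real unfolding forward_conv_def by blast
  then show "\<exists>k. \<forall>n\<ge>k. norm (d x (s n)) \<le> \<epsilon>"
    using norm_le_if_c_le[OF pos] \<open>0 < \<epsilon>\<close> by fastforce
qed

end

lemma backward_cauchy_iff_forward_cauchy_flip:
  "backward_cauchy sc star d s \<longleftrightarrow> forward_cauchy sc star (\<lambda>x y. d y x) s"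
  unfolding backward_cauchy_def forward_cauchy_def ..

lemma backward_conv_iff_forward_conv_flip:
  "backward_conv sc star d s x \<longleftrightarrow> forward_conv sc star (\<lambda>x y. d y x) s x"
  unfolding backward_conv_def forward_conv_def ..

theorem mainTheorem2:
  fixes sc :: "complex \<Rightarrow> 'a::{real_normed_algebra_1,banach} \<Rightarrow> 'a"
    and star :: "'a \<Rightarrow> 'a"
    and d :: "'x \<Rightarrow> 'x \<Rightarrow> 'a"
    and T :: "'x \<Rightarrow> 'x"
  assumes "cstar_algebra sc star"
    and "casym_metric sc star d"
    and "casym_complete sc star d"
    and "\<exists>a. norm a < 1 \<and> (\<forall>x y. c_le sc star (d (T x) (T y)) (star a * d x y * a))"
  shows "\<exists>!x. T x = x"
proof -
  interpret cstar sc star by (rule cstar.intro) (fact assms(1))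
  obtain a where "norm a < 1"
    and contr: "\<And>x y. c_le sc star (d (T x) (T y)) (star a * d x y * a)"
    using assms(4) by blast
  have nonneg: "\<And>x y. nonneg (d x y)" and eq_0: "\<And>x y. d x y = 0 \<longleftrightarrow> x = y"
    and tri: "\<And>x y z. c_le sc star (d x y) (d x z + d z y)"
    using assms(2) unfolding casym_metric_def c_le_def by simp_all
  show ?thesis
  proof (rule real_quasi_metric_fixed_point[where D = "\<lambda>x y. norm (d x y)" and k = "norm a ^ 2"])
    show "norm (d x z) \<le> norm (d x y) + norm (d y z)" for x y z
      using norm_le_if_c_le[OF nonneg tri] norm_triangle_ineq order_trans by blast
    show "norm (d (T x) (T y)) \<le> norm a ^ 2 * norm (d x y)" for x y
      using norm_le_if_c_le[OF nonneg contr] norm_star_mult_mult order_trans by blast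
    show "norm a ^ 2 < 1" using \<open>norm a < 1\<close> by (simp add: power_less_one_iff)
    fix s
    assume "real_forward_cauchy (\<lambda>x y. norm (d x y)) s"
    then show "\<exists>x. real_forward_conv (\<lambda>x y. norm (d x y)) s x"
      using assms(3) forward_cauchy_if_real_forward_cauchy[of d, OF nonneg]
        real_forward_conv_if_forward_conv[of d, OF nonneg]
      unfolding casym_complete_def by blast
  next
    fix s
    assume "real_forward_cauchy (\<lambda>x y. norm (d y x)) s"
    then show "\<exists>x. real_forward_conv (\<lambda>x y. norm (d y x)) s x"
      using assms(3) forward_cauchy_if_real_forward_cauchy[of "\<lambda>x y. d y x", OF nonneg]
        real_forward_conv_if_forward_conv[of "\<lambda>x y. d y x", OF nonneg]
      unfolding casym_complete_def backward_cauchy_iff_forward_cauchy_flip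
        backward_conv_iff_forward_conv_flip by blast
  qed (simp_all add: eq_0)
qed

end
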